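(* Let $p$ be a lattice norm on $\mathbb{R}^2$ with $p((1,0))=1$ which is strictly increasing on the half-line $\{(1,u):u\in[0,\infty)\}$ (i.e. $0\le u<u'$ implies $p((1,u))<p((1,u'))$), and let $\Phi$ be a strictly convex Orlicz function. Assume that for every $x\in L^\Phi(\mu)\setminus\{0\}$ there exists $l\in(0,\infty)$ with $\|x\|_{\Phi,p}=\frac1l p((1,I_\Phi(lx)))$. Then $(L^\Phi(\mu),\|\cdot\|_{\Phi,p})$ is strictly convex.
   Context: $(\Omega,\Sigma,\mu)$ is a $\sigma$-finite complete measure space, $L^0$ the space of (classes of a.e. equal) real measurable functions. An Orlicz function is a function $\Phi:\mathbb{R}\to[0,\infty)$ which is convex, even, vanishes at $0$ and is not identically zero. $I_\Phi(x)=\int_\Omega\Phi(x(t))\,d\mu\in[0,+\infty]$; $L^\Phi(\mu)=\{x\in L^0: I_\Phi(\lambda x)<\infty\text{ for some }\lambda>0\}$. A lattice norm on $\mathbb{R}^2$ is a norm $p$ with $p((u,v))\le p((u',v'))$ whenever $|u|\le|u'|,|v|\le|v'|$; $\|x\|_{\Phi,p}=\inf_{k>0}\frac1k p((1,I_\Phi(kx)))$ with the convention $p((1,+\infty))=+\infty$. A normed space is strictly convex if $\|x\|=\|y\|=1$, $x\ne y$ imply $\|(x+y)/2\|<1$. *)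

theory Defs
  imports "HOL-Analysis.Analysis"
begin

definition orlicz_fun :: "(real \<Rightarrow> real) \<Rightarrow> bool" where
  "orlicz_fun \<Phi> \<longleftrightarrow> (\<forall>t. 0 \<le> \<Phi> t) \<and> convex_on UNIV \<Phi> \<and> (\<forall>t. \<Phi> (-t) = \<Phi> t)
     \<and> \<Phi> 0 = 0 \<and> (\<exists>t. \<Phi> t \<noteq> 0)"

definition strictly_convex_fun :: "(real \<Rightarrow> real) \<Rightarrow> bool" where
  "strictly_convex_fun \<Phi> \<longleftrightarrow> (\<forall>a b c. a \<noteq> b \<and> 0 < c \<and> c < 1 \<longrightarrow>
      \<Phi> (c * a + (1 - c) * b) < c * \<Phi> a + (1 - c) * \<Phi> b)"

definition lattice_norm :: "(real \<times> real \<Rightarrow> real) \<Rightarrow> bool" where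
  "lattice_norm p \<longleftrightarrow>
     (\<forall>u v. p (u, v) = 0 \<longleftrightarrow> u = 0 \<and> v = 0) \<and>
     (\<forall>a u v. p (a * u, a * v) = \<bar>a\<bar> * p (u, v)) \<and>
     (\<forall>u v u' v'. p (u + u', v + v') \<le> p (u, v) + p (u', v')) \<and>
     (\<forall>u v u' v'. \<bar>u\<bar> \<le> \<bar>u'\<bar> \<and> \<bar>v\<bar> \<le> \<bar>v'\<bar> \<longrightarrow> p (u, v) \<le> p (u', v'))"

definition I_Phi :: "'a measure \<Rightarrow> (real \<Rightarrow> real) \<Rightarrow> ('a \<Rightarrow> real) \<Rightarrow> ennreal" where
  "I_Phi M \<Phi> x = (\<integral>\<^sup>+ t. ennreal (\<Phi> (x t)) \<partial>M)"

text \<open>Orlicz space L^\<Phi>: measurable functions (representatives of classes) with I(\<lambda>x) < \<infinity> for some \<lambda> > 0.\<close>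
definition orlicz_space :: "'a measure \<Rightarrow> (real \<Rightarrow> real) \<Rightarrow> ('a \<Rightarrow> real) set" where
  "orlicz_space M \<Phi> = {x \<in> borel_measurable M. \<exists>l>0. I_Phi M \<Phi> (\<lambda>t. l * x t) < \<infinity>}"

definition p_ext :: "(real \<times> real \<Rightarrow> real) \<Rightarrow> ennreal \<Rightarrow> ennreal" where
  "p_ext p i = (if i = \<infinity> then \<infinity> else ennreal (p (1, enn2real i)))"

definition orlicz_p_norm :: "'a measure \<Rightarrow> (real \<Rightarrow> real) \<Rightarrow> (real \<times> real \<Rightarrow> real) \<Rightarrow> ('a \<Rightarrow> real) \<Rightarrow> ennreal" where
  "orlicz_p_norm M \<Phi> p x =
     (INF k\<in>{0<..}. ennreal (1 / k) * p_ext p (I_Phi M \<Phi> (\<lambda>t. k * x t)))"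

end

theory Submission
  imports Defs
begin

text \<open>
  Let \<open>x \<noteq> y\<close> be of norm one and let \<open>k, l\<close> be the constants at which their norms are
  attained, so that \<open>p((1, I(kx))) = k\<close> and \<open>p((1, I(ly))) = l\<close>. With \<open>a = l/(k+l)\<close> and
  \<open>h = 2kl/(k+l)\<close> we have \<open>h(x+y)/2 = a(kx) + (1-a)(ly)\<close>. Unless \<open>kx = ly\<close> a.e. (which
  forces \<open>k = l\<close> and hence \<open>x = y\<close>), strict convexity of \<open>\<Phi>\<close> gives
  \<open>I(h(x+y)/2) < a I(kx) + (1-a) I(ly)\<close>, and strict monotonicity and convexity of \<open>p\<close>
  then yield \<open>p((1, I(h(x+y)/2))) < ak + (1-a)l = h\<close>, i.e. \<open>\<parallel>(x+y)/2\<parallel> < 1\<close>.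
\<close>

lemma lattice_norm_nonneg:
  assumes "lattice_norm p"
  shows "0 \<le> p (u, v)"
proof -
  have "p (0, 0) \<le> p (u, v)" and "p (0, 0) = 0"
    using assms unfolding lattice_norm_def by auto
  thus ?thesis by simp
qed

lemma lattice_norm_convex_comb:
  assumes "lattice_norm p" and "0 \<le> a" and "a \<le> 1"
  shows "p (a * u + (1 - a) * u', a * v + (1 - a) * v') \<le> a * p (u, v) + (1 - a) * p (u', v')"
proof -
  have "p (a * u + (1 - a) * u', a * v + (1 - a) * v')
      \<le> p (a * u, a * v) + p ((1 - a) * u', (1 - a) * v')"
    using assms(1) unfolding lattice_norm_def by blast
  also have "\<dots> = a * p (u, v) + (1 - a) * p (u', v')"
    using assms unfolding lattice_norm_def by simp
  finally show ?thesis .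
qed

lemma orlicz_fun_nonneg: "orlicz_fun \<Phi> \<Longrightarrow> 0 \<le> \<Phi> t"
  unfolding orlicz_fun_def by blast

lemma borel_measurable_orlicz_fun_comp:
  assumes "orlicz_fun \<Phi>" and "f \<in> borel_measurable M"
  shows "(\<lambda>t. \<Phi> (f t)) \<in> borel_measurable M"
proof -
  have "continuous_on UNIV \<Phi>"
    using assms(1) unfolding orlicz_fun_def by (intro convex_on_continuous) auto
  thus ?thesis using assms(2) by (rule borel_measurable_continuous_on)
qed

lemma I_Phi_eq_integral:
  assumes "orlicz_fun \<Phi>" and "integrable M (\<lambda>t. \<Phi> (f t))"
  shows "I_Phi M \<Phi> f = ennreal (\<integral>t. \<Phi> (f t) \<partial>M)"
  unfolding I_Phi_def using assms by (intro nn_integral_eq_integral) (auto simp: orlicz_fun_nonneg)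

lemma integrable_if_I_Phi_finite:
  assumes "orlicz_fun \<Phi>" and "f \<in> borel_measurable M" and "I_Phi M \<Phi> f \<noteq> \<infinity>"
  shows "integrable M (\<lambda>t. \<Phi> (f t))"
  using assms borel_measurable_orlicz_fun_comp[OF assms(1,2)]
  by (intro integrableI_nonneg) (auto simp: I_Phi_def orlicz_fun_nonneg top.not_eq_extremum)

lemma orlicz_p_norm_le:
  "0 < k \<Longrightarrow> orlicz_p_norm M \<Phi> p x \<le> ennreal (1 / k) * p_ext p (I_Phi M \<Phi> (\<lambda>t. k * x t))"
  unfolding orlicz_p_norm_def by (rule INF_lower) simp

lemma orlicz_p_norm_lt_one:
  assumes "lattice_norm p" and "orlicz_fun \<Phi>" and "0 < h"
    and "integrable M (\<lambda>t. \<Phi> (h * x t))" and "p (1, \<integral>t. \<Phi> (h * x t) \<partial>M) < h"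
  shows "orlicz_p_norm M \<Phi> p x < 1"
proof -
  have "orlicz_p_norm M \<Phi> p x \<le> ennreal (1 / h) * p_ext p (I_Phi M \<Phi> (\<lambda>t. h * x t))"
    using assms(3) by (rule orlicz_p_norm_le)
  also have "\<dots> = ennreal (p (1, \<integral>t. \<Phi> (h * x t) \<partial>M) / h)"
    using assms(3) I_Phi_eq_integral[OF assms(2,4)] integral_nonneg_AE[of "\<lambda>t. \<Phi> (h * x t)" M]
    by (simp add: p_ext_def orlicz_fun_nonneg[OF assms(2)] ennreal_mult'[symmetric])
  also have "\<dots> < 1"
    using assms(3,5) lattice_norm_nonneg[OF assms(1)] by (simp add: ennreal_less_iff)
  finally show ?thesis .
qed

lemma orlicz_p_norm_AE_zero_le:
  assumes "p (1, 0) = 1" and "orlicz_fun \<Phi>" and "AE t in M. x t = 0" and "0 < k"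
  shows "orlicz_p_norm M \<Phi> p x \<le> ennreal (1 / k)"
proof -
  have "I_Phi M \<Phi> (\<lambda>t. k * x t) = (\<integral>\<^sup>+ t. 0 \<partial>M)"
    unfolding I_Phi_def
    by (rule nn_integral_cong_AE) (use assms(2,3) in \<open>auto simp: orlicz_fun_def\<close>)
  thus ?thesis
    using orlicz_p_norm_le[OF assms(4), of M \<Phi> p x] assms(1) by (simp add: p_ext_def)
qed

lemma orlicz_p_norm_one_attained:
  assumes "lattice_norm p" and "orlicz_fun \<Phi>" and "x \<in> borel_measurable M" and "0 < k"
    and "1 = ennreal (1 / k) * p_ext p (I_Phi M \<Phi> (\<lambda>t. k * x t))"
  shows "integrable M (\<lambda>t. \<Phi> (k * x t))" and "p (1, \<integral>t. \<Phi> (k * x t) \<partial>M) = k"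
proof -
  have "I_Phi M \<Phi> (\<lambda>t. k * x t) \<noteq> \<infinity>"
    using assms(4,5) by (auto simp: p_ext_def ennreal_mult_top)
  with assms(2,3) show int: "integrable M (\<lambda>t. \<Phi> (k * x t))"
    by (intro integrable_if_I_Phi_finite) auto
  have "ennreal 1 = ennreal (p (1, \<integral>t. \<Phi> (k * x t) \<partial>M) / k)"
    using assms(4,5) I_Phi_eq_integral[OF assms(2) int] integral_nonneg_AE[of "\<lambda>t. \<Phi> (k * x t)" M]
    by (simp add: p_ext_def orlicz_fun_nonneg[OF assms(2)] ennreal_mult'[symmetric])
  hence "p (1, \<integral>t. \<Phi> (k * x t) \<partial>M) / k = 1"
    using assms(4) lattice_norm_nonneg[OF assms(1)] by (subst (asm) ennreal_inj) auto
  with assms(4) show "p (1, \<integral>t. \<Phi> (k * x t) \<partial>M) = k" by simp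
qed

lemma orlicz_p_norm_eq_one_not_AE_zero:
  assumes "p (1, 0) = 1" and "orlicz_fun \<Phi>" and "orlicz_p_norm M \<Phi> p x = 1"
  shows "\<not> (AE t in M. x t = 0)"
proof
  assume "AE t in M. x t = 0"
  hence "orlicz_p_norm M \<Phi> p x \<le> ennreal (1 / 2)"
    by (intro orlicz_p_norm_AE_zero_le assms(1,2)) auto
  hence "ennreal 1 \<le> ennreal (1 / 2)"
    using assms(3) by simp
  thus False by (subst (asm) ennreal_le_iff) auto
qed

lemma orlicz_p_norm_eq_one_obtain_attained:
  assumes "lattice_norm p" and "p (1, 0) = 1" and "orlicz_fun \<Phi>"
    and "x \<in> orlicz_space M \<Phi>" and "orlicz_p_norm M \<Phi> p x = 1"
    and "\<not> (AE t in M. x t = 0) \<Longrightarrow>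
           \<exists>k>0. orlicz_p_norm M \<Phi> p x = ennreal (1 / k) * p_ext p (I_Phi M \<Phi> (\<lambda>t. k * x t))"
  obtains k where "0 < k" and "integrable M (\<lambda>t. \<Phi> (k * x t))"
    and "p (1, \<integral>t. \<Phi> (k * x t) \<partial>M) = k"
proof -
  obtain k where k: "0 < k"
    and "orlicz_p_norm M \<Phi> p x = ennreal (1 / k) * p_ext p (I_Phi M \<Phi> (\<lambda>t. k * x t))"
    using assms(6) orlicz_p_norm_eq_one_not_AE_zero[OF assms(2,3,5)] by blast
  hence "1 = ennreal (1 / k) * p_ext p (I_Phi M \<Phi> (\<lambda>t. k * x t))"
    using assms(5) by simp
  moreover have "x \<in> borel_measurable M"
    using assms(4) by (simp add: orlicz_space_def)
  ultimately show ?thesis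
    using that k orlicz_p_norm_one_attained[OF assms(1,3)] by blast
qed

lemma integrable_orlicz_fun_convex_comb:
  assumes "orlicz_fun \<Phi>" and "f \<in> borel_measurable M" and "g \<in> borel_measurable M"
    and "integrable M (\<lambda>t. \<Phi> (f t))" and "integrable M (\<lambda>t. \<Phi> (g t))"
    and "0 \<le> a" and "a \<le> 1"
  shows "integrable M (\<lambda>t. \<Phi> (a * f t + (1 - a) * g t))"
proof (rule Bochner_Integration.integrable_bound)
  show "integrable M (\<lambda>t. a * \<Phi> (f t) + (1 - a) * \<Phi> (g t))"
    using assms(4,5) by auto
  show "(\<lambda>t. \<Phi> (a * f t + (1 - a) * g t)) \<in> borel_measurable M"
    by (intro borel_measurable_orlicz_fun_comp[OF assms(1)]) (use assms(2,3) in measurable)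
  have "\<Phi> (a * u + (1 - a) * v) \<le> a * \<Phi> u + (1 - a) * \<Phi> v" for u v
    using convex_onD[of UNIV \<Phi> a v u] assms(1,6,7)
    by (simp add: orlicz_fun_def algebra_simps)
  moreover have "0 \<le> a * \<Phi> u + (1 - a) * \<Phi> v" for u v
    using assms(6,7) by (simp add: orlicz_fun_nonneg[OF assms(1)])
  ultimately show "AE t in M. norm (\<Phi> (a * f t + (1 - a) * g t))
      \<le> norm (a * \<Phi> (f t) + (1 - a) * \<Phi> (g t))"
    by (simp add: orlicz_fun_nonneg[OF assms(1)])
qed

lemma integral_strictly_convex_comb_less:
  assumes "strictly_convex_fun \<Phi>" and "orlicz_fun \<Phi>"
    and "f \<in> borel_measurable M" and "g \<in> borel_measurable M"
    and "integrable M (\<lambda>t. \<Phi> (f t))" and "integrable M (\<lambda>t. \<Phi> (g t))"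
    and "0 < a" and "a < 1" and "\<not> (AE t in M. f t = g t)"
  shows "(\<integral>t. \<Phi> (a * f t + (1 - a) * g t) \<partial>M)
           < a * (\<integral>t. \<Phi> (f t) \<partial>M) + (1 - a) * (\<integral>t. \<Phi> (g t) \<partial>M)"
proof -
  define D where "D t = a * \<Phi> (f t) + (1 - a) * \<Phi> (g t) - \<Phi> (a * f t + (1 - a) * g t)" for t
  have strict: "D t > 0" if "f t \<noteq> g t" for t
    using assms(1,7,8) that unfolding strictly_convex_fun_def D_def by auto
  have D_nonneg: "D t \<ge> 0" for t
    using strict[of t] by (cases "f t = g t") (auto simp: D_def algebra_simps)
  moreover have "integrable M D"
    unfolding D_def using assms integrable_orlicz_fun_convex_comb[OF assms(2-6), of a] by auto
  moreover have "\<not> (AE t in M. D t = 0)"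
  proof
    assume "AE t in M. D t = 0"
    hence "AE t in M. f t = g t"
      by eventually_elim (use strict in force)
    with assms(9) show False by simp
  qed
  ultimately have "integral\<^sup>L M D \<noteq> 0"
    by (subst integral_nonneg_eq_0_iff_AE) auto
  moreover have "integral\<^sup>L M D \<ge> 0"
    using D_nonneg by simp
  ultimately have "integral\<^sup>L M D > 0" by simp
  thus ?thesis
    unfolding D_def using assms integrable_orlicz_fun_convex_comb[OF assms(2-6), of a] by simp
qed

lemma scaled_midpoint_convex_comb:
  fixes k l :: real
  assumes "0 < k" and "0 < l"
  obtains a h where "0 < a" and "a < 1" and "0 < h" and "a * k + (1 - a) * l = h"
    and "\<And>u v. h * ((u + v) / 2) = a * (k * u) + (1 - a) * (l * v)"
proof
  define a where "a = l / (k + l)"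
  define h where "h = 2 * k * l / (k + l)"
  have ak: "a * k = h / 2" and al: "(1 - a) * l = h / 2"
    unfolding a_def h_def using assms by (simp_all add: field_simps)
  show "0 < a" "a < 1" "0 < h"
    using assms by (simp_all add: a_def h_def)
  show "a * k + (1 - a) * l = h"
    unfolding ak al by simp
  fix u v
  have "a * (k * u) + (1 - a) * (l * v) = (a * k) * u + ((1 - a) * l) * v"
    by (simp only: mult.assoc)
  thus "h * ((u + v) / 2) = a * (k * u) + (1 - a) * (l * v)"
    unfolding ak al by (simp add: algebra_simps)
qed

lemma orlicz_p_norm_midpoint_lt_one:
  assumes p: "lattice_norm p" and p_mono: "\<And>u u'. 0 \<le> u \<Longrightarrow> u < u' \<Longrightarrow> p (1, u) < p (1, u')"
    and \<Phi>: "orlicz_fun \<Phi>" and \<Phi>_strict: "strictly_convex_fun \<Phi>"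
    and xm: "x \<in> borel_measurable M" and ym: "y \<in> borel_measurable M"
    and k: "0 < k" and int_x: "integrable M (\<lambda>t. \<Phi> (k * x t))"
    and p_x: "p (1, \<integral>t. \<Phi> (k * x t) \<partial>M) = k"
    and l: "0 < l" and int_y: "integrable M (\<lambda>t. \<Phi> (l * y t))"
    and p_y: "p (1, \<integral>t. \<Phi> (l * y t) \<partial>M) = l"
    and x_ne_y: "\<not> (AE t in M. x t = y t)"
  shows "orlicz_p_norm M \<Phi> p (\<lambda>t. (x t + y t) / 2) < 1"
proof -
  obtain a h where a: "0 < a" "a < 1" and h: "0 < h" and h_eq: "a * k + (1 - a) * l = h"
    and mid: "\<And>u v. h * ((u + v) / 2) = a * (k * u) + (1 - a) * (l * v)"
    using scaled_midpoint_convex_comb[OF k l] by blast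
  have "\<not> (AE t in M. k * x t = l * y t)"
  proof
    assume ae: "AE t in M. k * x t = l * y t"
    from ae have "AE t in M. \<Phi> (k * x t) = \<Phi> (l * y t)"
      by eventually_elim simp
    hence "(\<integral>t. \<Phi> (k * x t) \<partial>M) = (\<integral>t. \<Phi> (l * y t) \<partial>M)"
      using int_x int_y by (intro integral_cong_AE) auto
    hence "k = l" using p_x p_y by simp
    with ae k have "AE t in M. x t = y t" by simp
    with x_ne_y show False ..
  qed
  with xm ym int_x int_y a
  have "(\<integral>t. \<Phi> (h * ((x t + y t) / 2)) \<partial>M)
      < a * (\<integral>t. \<Phi> (k * x t) \<partial>M) + (1 - a) * (\<integral>t. \<Phi> (l * y t) \<partial>M)"
    unfolding mid by (intro integral_strictly_convex_comb_less[OF \<Phi>_strict \<Phi>]) auto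
  hence "p (1, \<integral>t. \<Phi> (h * ((x t + y t) / 2)) \<partial>M)
      < p (1, a * (\<integral>t. \<Phi> (k * x t) \<partial>M) + (1 - a) * (\<integral>t. \<Phi> (l * y t) \<partial>M))"
    by (intro p_mono) (simp add: orlicz_fun_nonneg[OF \<Phi>])
  also have "\<dots> \<le> a * k + (1 - a) * l"
    using lattice_norm_convex_comb[OF p, of a 1 1 "\<integral>t. \<Phi> (k * x t) \<partial>M" "\<integral>t. \<Phi> (l * y t) \<partial>M"]
      a p_x p_y by simp
  finally have "p (1, \<integral>t. \<Phi> (h * ((x t + y t) / 2)) \<partial>M) < h"
    unfolding h_eq .
  moreover have "integrable M (\<lambda>t. \<Phi> (h * ((x t + y t) / 2)))"
    unfolding mid using xm ym int_x int_y a
    by (intro integrable_orlicz_fun_convex_comb[OF \<Phi>]) auto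
  ultimately show ?thesis
    by (rule orlicz_p_norm_lt_one[OF p \<Phi> h, rotated])
qed

theorem theorem5:
  fixes M :: "'a measure" and \<Phi> :: "real \<Rightarrow> real" and p :: "real \<times> real \<Rightarrow> real"
  assumes "sigma_finite_measure M" and "complete_measure M"
    and "lattice_norm p" and "p (1, 0) = 1"
    and "\<And>u u'. 0 \<le> u \<Longrightarrow> u < u' \<Longrightarrow> p (1, u) < p (1, u')"
    and "orlicz_fun \<Phi>" and "strictly_convex_fun \<Phi>"
    and "\<And>x. x \<in> orlicz_space M \<Phi> \<Longrightarrow> \<not> (AE t in M. x t = 0) \<Longrightarrow>
           \<exists>l>0. orlicz_p_norm M \<Phi> p x = ennreal (1 / l) * p_ext p (I_Phi M \<Phi> (\<lambda>t. l * x t))"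
  shows "\<forall>x\<in>orlicz_space M \<Phi>. \<forall>y\<in>orlicz_space M \<Phi>.
           orlicz_p_norm M \<Phi> p x = 1 \<and> orlicz_p_norm M \<Phi> p y = 1 \<and> \<not> (AE t in M. x t = y t)
           \<longrightarrow> orlicz_p_norm M \<Phi> p (\<lambda>t. (x t + y t) / 2) < 1"
proof (intro ballI impI, elim conjE)
  fix x y
  assume x: "x \<in> orlicz_space M \<Phi>" and y: "y \<in> orlicz_space M \<Phi>"
    and norm_x: "orlicz_p_norm M \<Phi> p x = 1" and norm_y: "orlicz_p_norm M \<Phi> p y = 1"
    and x_ne_y: "\<not> (AE t in M. x t = y t)"
  obtain k where "0 < k" "integrable M (\<lambda>t. \<Phi> (k * x t))" "p (1, \<integral>t. \<Phi> (k * x t) \<partial>M) = k"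
    using orlicz_p_norm_eq_one_obtain_attained[OF assms(3,4,6) x norm_x assms(8)[OF x]] .
  moreover obtain l where "0 < l" "integrable M (\<lambda>t. \<Phi> (l * y t))" "p (1, \<integral>t. \<Phi> (l * y t) \<partial>M) = l"
    using orlicz_p_norm_eq_one_obtain_attained[OF assms(3,4,6) y norm_y assms(8)[OF y]] .
  moreover have "x \<in> borel_measurable M" and "y \<in> borel_measurable M"
    using x y by (simp_all add: orlicz_space_def)
  ultimately show "orlicz_p_norm M \<Phi> p (\<lambda>t. (x t + y t) / 2) < 1"
    using orlicz_p_norm_midpoint_lt_one[OF assms(3,5,6,7)] x_ne_y by blast
qed

end
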